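(* Let $r\in\mathbb{R}$, $k\geq 0$, $f(x)=x^2\exp(r-x)+k$ and $c=2$. If \[ f^2(c)<f^3(c)<c<f(c), \] then $f$, regarded as a self-map of the compact interval $[f^2(c),f(c)]$, is chaotic in the sense of Li and Yorke, in the sense of Block and Coppel, and in the sense of Devaney.
   Context: Let $X$ be a compact metric space and $f\colon X\to X$ continuous. (Li–Yorke) $f$ is L/Y-chaotic if there is an uncountable $S\subset X$ such that for all $x\neq y$ in $S$: $\limsup_n d(f^n x,f^n y)>0$ and $\liminf_n d(f^n x,f^n y)=0$, and for all $x\in S$ and all periodic $p\in X$: $\limsup_n d(f^n x,f^n p)>0$. (Block–Coppel) $f$ is B/C-chaotic if there are $m\in\mathbb{N}$ and a compact $f^m$-invariant $Y\subset X$ and a continuous surjection $h\colon Y\to\Sigma$ with $h\circ f^m=\sigma\circ h$ on $Y$, where $\Sigma=\{0,1\}^{\mathbb{N}}$ with metric $d(\alpha,\beta)=\sum_{i\ge0}|a_i-b_i|/2^i$ and $\sigma$ is the shift $(a_0a_1a_2\dots)\mapsto(a_1a_2\dots)$. (Devaney) $f$ is D-chaotic if there is a compact invariant $Y\subset X$ such that $f|_Y$ is topologically transitive, periodic points of $f|_Y$ are dense in $Y$, and $f|_Y$ has sensitive dependence on initial conditions. *)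

theory Defs
  imports "HOL-Analysis.Analysis" "HOL-Library.Liminf_Limsup"
begin

definition periodic_pt :: "('a \<Rightarrow> 'a) \<Rightarrow> 'a \<Rightarrow> bool" where
  "periodic_pt f p \<longleftrightarrow> (\<exists>m>0. (f ^^ m) p = p)"

definition LY_chaotic :: "'a::metric_space set \<Rightarrow> ('a \<Rightarrow> 'a) \<Rightarrow> bool" where
  "LY_chaotic X f \<longleftrightarrow>
     (\<exists>S\<subseteq>X. uncountable S \<and>
        (\<forall>x\<in>S. \<forall>y\<in>S. x \<noteq> y \<longrightarrow>
            limsup (\<lambda>n. ereal (dist ((f ^^ n) x) ((f ^^ n) y))) > 0 \<and>
            liminf (\<lambda>n. ereal (dist ((f ^^ n) x) ((f ^^ n) y))) = 0) \<and>
        (\<forall>x\<in>S. \<forall>p\<in>X. periodic_pt f p \<longrightarrow>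
            limsup (\<lambda>n. ereal (dist ((f ^^ n) x) ((f ^^ n) p))) > 0))"

definition sigma_dist :: "(nat \<Rightarrow> bool) \<Rightarrow> (nat \<Rightarrow> bool) \<Rightarrow> real" where
  "sigma_dist \<alpha> \<beta> = (\<Sum>i. (if \<alpha> i = \<beta> i then 0 else 1) / 2 ^ i)"

definition shift :: "(nat \<Rightarrow> bool) \<Rightarrow> (nat \<Rightarrow> bool)" where
  "shift \<alpha> = (\<lambda>i. \<alpha> (Suc i))"

definition BC_chaotic :: "'a::metric_space set \<Rightarrow> ('a \<Rightarrow> 'a) \<Rightarrow> bool" where
  "BC_chaotic X f \<longleftrightarrow>
     (\<exists>m::nat. m > 0 \<and> (\<exists>Y\<subseteq>X. compact Y \<and> (f ^^ m) ` Y \<subseteq> Y \<and>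
        (\<exists>h :: 'a \<Rightarrow> (nat \<Rightarrow> bool).
            (\<forall>y\<in>Y. \<forall>e>0. \<exists>d>0. \<forall>z\<in>Y. dist z y < d \<longrightarrow> sigma_dist (h z) (h y) < e) \<and>
            h ` Y = UNIV \<and>
            (\<forall>y\<in>Y. h ((f ^^ m) y) = shift (h y)))))"

definition D_chaotic :: "'a::metric_space set \<Rightarrow> ('a \<Rightarrow> 'a) \<Rightarrow> bool" where
  "D_chaotic X f \<longleftrightarrow>
     (\<exists>Y\<subseteq>X. Y \<noteq> {} \<and> compact Y \<and> f ` Y \<subseteq> Y \<and>
        (\<forall>U V. openin (top_of_set Y) U \<longrightarrow> openin (top_of_set Y) V \<longrightarrow>
               U \<noteq> {} \<longrightarrow> V \<noteq> {} \<longrightarrow> (\<exists>n>0. (f ^^ n) ` U \<inter> V \<noteq> {})) \<and>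
        Y \<subseteq> closure {p\<in>Y. periodic_pt f p} \<and>
        (\<exists>\<delta>>0. \<forall>x\<in>Y. \<forall>e>0. \<exists>y\<in>Y. \<exists>n. dist x y < e \<and>
               dist ((f ^^ n) x) ((f ^^ n) y) > \<delta>))"

end

theory Submission
  imports Defs "HOL-Library.Discrete_Functions"
begin

text \<open>Write \<open>a = f (f 2)\<close> and \<open>b = f 2\<close>. The map increases up to its critical point \<open>2\<close> and
  decreases after it, and the hypotheses make \<open>[a, b]\<close> invariant. They also give points
  \<open>2 \<le> u < p < v < b\<close> with \<open>f p = 2\<close> such that \<open>f ^^ 2\<close> maps each of \<open>[u, p]\<close> and \<open>[p, v]\<close>
  monotonically over \<open>[u, v]\<close>, while \<open>(f ^^ 2) p = b\<close> escapes: a horseshoe for \<open>f ^^ 2\<close>.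

  On the points whose \<open>f ^^ 2\<close>-orbit never leaves \<open>[u, v]\<close>, the itinerary (left or right
  lap at each time) semiconjugates \<open>f ^^ 2\<close> onto the full shift, which is Block--Coppel chaos.
  By monotonicity on the laps every fibre of the itinerary map is an interval, so all but countably
  many fibres are single points. Interleaving the bits of arbitrary sequences with ever longer
  blocks of one such thin itinerary gives an uncountable scrambled set (Li--Yorke). The closure of
  the points with thin fibres, together with its image under \<open>f\<close>, is a compact invariant set on
  which \<open>f\<close> is transitive and sensitive and has dense periodic points (Devaney).\<close>

lemma isCont_funpow:
  fixes f :: "'a::t2_space \<Rightarrow> 'a"
  assumes "\<And>x. isCont f x"
  shows "isCont (f ^^ n) x"
proof (induction n arbitrary: x)
  case 0
  then show ?case by (simp add: id_def)
next
  case (Suc n)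
  have "isCont (\<lambda>y. f ((f ^^ n) y)) x" by (rule isCont_o2[OF Suc.IH assms])
  then show ?case by (simp add: comp_def)
qed

lemma funpow_mult_fixpoint: "(h ^^ m) q = q \<Longrightarrow> (h ^^ (t * m)) q = q"
  by (induction t) (simp_all add: funpow_add)

lemma periodic_pt_funpow: "periodic_pt f q \<Longrightarrow> periodic_pt f ((f ^^ k) q)"
  unfolding periodic_pt_def by (metis add.commute comp_apply funpow_add)

lemma limsup_pos_if_frequently_ge:
  fixes F :: "nat \<Rightarrow> real"
  assumes "0 < d" and "\<exists>\<^sub>F n in sequentially. d \<le> F n"
  shows "0 < limsup (\<lambda>n. ereal (F n))"
proof (rule ccontr)
  assume "\<not> 0 < limsup (\<lambda>n. ereal (F n))"
  moreover have "0 < ereal d" using assms(1) by simp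
  ultimately have "\<forall>\<^sub>F n in sequentially. ereal (F n) < ereal d"
    unfolding not_less Limsup_le_iff by blast
  then have "\<forall>\<^sub>F n in sequentially. \<not> d \<le> F n" by (rule eventually_mono) auto
  then show False using assms(2) by (simp add: frequently_def)
qed

lemma liminf_eq_0_if_frequently_lt:
  fixes F :: "nat \<Rightarrow> real"
  assumes "\<And>n. 0 \<le> F n" and "\<And>e. 0 < e \<Longrightarrow> \<exists>\<^sub>F n in sequentially. F n < e"
  shows "liminf (\<lambda>n. ereal (F n)) = 0"
proof (rule antisym)
  show "liminf (\<lambda>n. ereal (F n)) \<le> 0"
  proof (rule ccontr)
    assume "\<not> liminf (\<lambda>n. ereal (F n)) \<le> 0"
    then obtain e :: real where "0 < e" "ereal e < liminf (\<lambda>n. ereal (F n))"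
      by (metis ereal_dense2 ereal_less(2) not_le order.strict_trans)
    then have "\<forall>\<^sub>F n in sequentially. ereal e < ereal (F n)" by (intro less_LiminfD)
    then have "\<forall>\<^sub>F n in sequentially. \<not> F n < e" by (rule eventually_mono) auto
    then show False using assms(2)[OF \<open>0 < e\<close>] by (simp add: frequently_def)
  qed
  show "0 \<le> liminf (\<lambda>n. ereal (F n))"
    by (rule Liminf_bounded) (simp add: assms(1))
qed

section \<open>Bit sequences\<close>

lemma uncountable_bool_seqs: "uncountable (UNIV :: (nat \<Rightarrow> bool) set)"
proof
  define F where "F = from_nat_into (UNIV :: (nat \<Rightarrow> bool) set)"
  assume "countable (UNIV :: (nat \<Rightarrow> bool) set)"
  then have "range F = UNIV" by (simp add: F_def)
  then obtain n where "(\<lambda>i. \<not> F i i) = F n" by (metis UNIV_I rangeE)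
  from fun_cong[OF this, of n] show False by simp
qed

lemma uncountable_cylinder: "uncountable {\<beta> :: nat \<Rightarrow> bool. \<forall>i<L. \<beta> i = w i}"
proof
  define E where "E \<gamma> = (\<lambda>i. if i < L then w i else \<gamma> (i - L))" for \<gamma> :: "nat \<Rightarrow> bool"
  assume "countable {\<beta> :: nat \<Rightarrow> bool. \<forall>i<L. \<beta> i = w i}"
  moreover have "range E \<subseteq> {\<beta>. \<forall>i<L. \<beta> i = w i}" by (auto simp: E_def)
  ultimately have "countable (range E)" by (rule countable_subset[rotated])
  moreover have "inj E"
  proof (rule injI)
    fix \<gamma> \<gamma>' assume "E \<gamma> = E \<gamma>'"
    then have "E \<gamma> (i + L) = E \<gamma>' (i + L)" for i by simp
    then show "\<gamma> = \<gamma>'" by (auto simp: E_def)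
  qed
  ultimately show False using uncountable_bool_seqs countable_image_inj_on by blast
qed

lemma ex_cylinder_notin_countable:
  assumes "countable C"
  obtains \<beta> :: "nat \<Rightarrow> bool" where "\<forall>i<L. \<beta> i = w i" "\<beta> \<notin> C"
proof -
  have "uncountable ({\<beta>. \<forall>i<L. \<beta> i = w i} - C)"
    by (rule uncountable_minus_countable[OF uncountable_cylinder assms])
  then have "{\<beta>. \<forall>i<L. \<beta> i = w i} - C \<noteq> {}" by (metis countable_empty)
  then show ?thesis using that by blast
qed

definition eventually_periodic :: "(nat \<Rightarrow> 'a) \<Rightarrow> bool" where
  "eventually_periodic \<alpha> \<longleftrightarrow> (\<exists>N P. 0 < P \<and> (\<forall>i\<ge>N. \<alpha> (i + P) = \<alpha> i))"

lemma eventually_periodic_eqI: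
  fixes \<alpha> \<beta> :: "nat \<Rightarrow> 'a" and N P :: nat
  assumes "0 < P" "\<forall>i\<ge>N. \<alpha> (i + P) = \<alpha> i" "\<forall>i\<ge>N. \<beta> (i + P) = \<beta> i"
    and "\<forall>i<N + P. \<alpha> i = \<beta> i"
  shows "\<alpha> = \<beta>"
proof
  fix i :: nat show "\<alpha> i = \<beta> i"
  proof (induction i rule: less_induct)
    case (less i)
    show ?case
    proof (cases "i < N + P")
      case False
      then have "i = (i - P) + P" "N \<le> i - P" "i - P < i" using assms(1) by auto
      then show ?thesis using less assms(2,3) by metis
    qed (use assms(4) in blast)
  qed
qed

lemma countable_eventually_periodic:
  "countable {\<alpha> :: nat \<Rightarrow> 'a::countable. eventually_periodic \<alpha>}"
proof -
  have "countable {\<alpha> :: nat \<Rightarrow> 'a. \<forall>i\<ge>N. \<alpha> (i + P) = \<alpha> i}" if "0 < P" for N P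
  proof (rule countable_image_inj_on)
    show "countable ((\<lambda>\<alpha> :: nat \<Rightarrow> 'a. map \<alpha> [0..<N + P]) ` {\<alpha>. \<forall>i\<ge>N. \<alpha> (i + P) = \<alpha> i})"
      by (rule countableI_type)
    show "inj_on (\<lambda>\<alpha> :: nat \<Rightarrow> 'a. map \<alpha> [0..<N + P]) {\<alpha>. \<forall>i\<ge>N. \<alpha> (i + P) = \<alpha> i}"
      by (rule inj_onI) (auto intro: eventually_periodic_eqI[OF that] simp: map_eq_conv)
  qed
  moreover have "{\<alpha>. eventually_periodic \<alpha>} =
      (\<Union>(N, P)\<in>UNIV \<times> {0<..}. {\<alpha> :: nat \<Rightarrow> 'a. \<forall>i\<ge>N. \<alpha> (i + P) = \<alpha> i})"
    by (auto simp: eventually_periodic_def)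
  ultimately show ?thesis by (auto intro!: countable_UN)
qed

lemma sigma_dist_le_if_prefix_eq:
  assumes "\<forall>i<N. \<alpha> i = \<beta> i"
  shows "sigma_dist \<alpha> \<beta> \<le> 2 * (1/2) ^ N"
proof -
  define a where "a i = (if \<alpha> i = \<beta> i then 0 else 1) / (2::real) ^ i" for i
  have a_le: "a i \<le> (1/2) ^ i" and a_ge: "0 \<le> a i" for i
    unfolding a_def by (simp_all add: power_one_over)
  have geom: "(\<lambda>i. (1/2::real) ^ i) sums 2"
    using geometric_sums[of "1/2::real"] by simp
  have "summable a"
    by (rule summable_comparison_test[of _ "\<lambda>i. (1/2::real) ^ i"])
       (use a_le a_ge geom in \<open>auto intro: sums_summable\<close>)
  then have "suminf a = (\<Sum>i. a (i + N)) + (\<Sum>i<N. a i)"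
    by (rule suminf_split_initial_segment)
  also have "(\<Sum>i<N. a i) = 0" using assms unfolding a_def by simp
  also have "(\<Sum>i. a (i + N)) \<le> (\<Sum>i. (1/2) ^ N * (1/2::real) ^ i)"
  proof (rule suminf_le)
    show "a (i + N) \<le> (1/2) ^ N * (1/2::real) ^ i" for i
      using a_le[of "i + N"] by (simp add: power_add mult.commute)
    show "summable (\<lambda>i. a (i + N))" using \<open>summable a\<close> by (simp add: summable_iff_shift)
    show "summable (\<lambda>i. (1/2) ^ N * (1/2::real) ^ i)"
      using sums_summable[OF sums_mult[OF geom]] by simp
  qed
  also have "(\<Sum>i. (1/2) ^ N * (1/2::real) ^ i) = (1/2) ^ N * 2"
    using sums_unique[OF sums_mult[OF geom, of "(1/2) ^ N"]] by simp
  finally show ?thesis unfolding sigma_dist_def a_def by simp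
qed

text \<open>Position \<open>2 ^ j\<close> (\<open>j \<ge> 1\<close>) carries the bit \<open>\<alpha> k\<close> with \<open>k = fst (prod_decode j)\<close>, so every
  bit of \<open>\<alpha>\<close> is repeated infinitely often; the positions \<open>2 ^ j + 1 .. 2 ^ (j + 1) - 1\<close> carry
  the prefix of \<open>\<gamma>\<close> of length \<open>2 ^ j - 1\<close>, at the same places for every \<open>\<alpha>\<close>.\<close>
definition scramble_code :: "(nat \<Rightarrow> bool) \<Rightarrow> (nat \<Rightarrow> bool) \<Rightarrow> nat \<Rightarrow> bool" where
  "scramble_code \<gamma> \<alpha> t =
     (if t < 2 then False
      else if t = 2 ^ floor_log t then \<alpha> (fst (prod_decode (floor_log t)))
      else \<gamma> (t - 2 ^ floor_log t - 1))"

lemma scramble_code_power: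
  assumes "1 \<le> j"
  shows "scramble_code \<gamma> \<alpha> (2 ^ j) = \<alpha> (fst (prod_decode j))"
proof -
  have "(2::nat) ^ 1 \<le> 2 ^ j" using assms by (intro power_increasing) auto
  then show ?thesis unfolding scramble_code_def by simp
qed

lemma scramble_code_block:
  assumes "1 \<le> j" and "i < 2 ^ j - 1"
  shows "scramble_code \<gamma> \<alpha> (2 ^ j + 1 + i) = \<gamma> i"
proof -
  have "(2::nat) ^ 1 \<le> 2 ^ j" using assms(1) by (intro power_increasing) auto
  moreover have "floor_log (2 ^ j + 1 + i) = j"
    by (rule floor_log_eqI) (use assms calculation in auto)
  ultimately show ?thesis unfolding scramble_code_def by simp
qed

lemma scramble_code_differ_frequently:
  assumes "\<alpha> k \<noteq> \<beta> k"
  shows "\<exists>t\<ge>N. scramble_code \<gamma> \<alpha> t \<noteq> scramble_code \<gamma> \<beta> t"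
proof -
  define j where "j = prod_encode (k, N + 1)"
  have "N + 1 \<le> j" unfolding j_def by (rule le_prod_encode_2)
  moreover have "j < 2 ^ j" by (rule less_exp)
  ultimately have "N \<le> 2 ^ j" by linarith
  moreover have "scramble_code \<gamma> \<alpha> (2 ^ j) \<noteq> scramble_code \<gamma> \<beta> (2 ^ j)"
    using scramble_code_power[of j] \<open>N + 1 \<le> j\<close> assms by (simp add: j_def)
  ultimately show ?thesis by blast
qed

lemma inj_scramble_code: "inj (scramble_code \<gamma>)"
proof (rule injI)
  fix \<alpha> \<beta> assume eq: "scramble_code \<gamma> \<alpha> = scramble_code \<gamma> \<beta>"
  show "\<alpha> = \<beta>"
  proof
    fix k show "\<alpha> k = \<beta> k"
      using scramble_code_differ_frequently[of \<alpha> k \<beta> 0 \<gamma>] eq by auto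
  qed
qed

lemma uncountable_not_eventually_periodic_scramble_codes:
  "uncountable {\<alpha>. \<not> eventually_periodic (scramble_code \<gamma> \<alpha>)}"
proof
  let ?E = "{\<alpha>. eventually_periodic (scramble_code \<gamma> \<alpha>)}"
  have "scramble_code \<gamma> ` ?E \<subseteq> {\<alpha>. eventually_periodic \<alpha>}" by auto
  then have "countable (scramble_code \<gamma> ` ?E)"
    using countable_eventually_periodic by (rule countable_subset)
  then have "countable ?E"
    by (rule countable_image_inj_on[OF _ inj_on_subset[OF inj_scramble_code subset_UNIV]])
  moreover assume "countable {\<alpha>. \<not> eventually_periodic (scramble_code \<gamma> \<alpha>)}"
  ultimately have "countable (?E \<union> {\<alpha>. \<not> eventually_periodic (scramble_code \<gamma> \<alpha>)})" by simp
  moreover have "?E \<union> {\<alpha>. \<not> eventually_periodic (scramble_code \<gamma> \<alpha>)} = UNIV" by blast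
  ultimately show False using uncountable_bool_seqs by simp
qed

definition monotonic_on :: "'a::linorder set \<Rightarrow> ('a \<Rightarrow> 'b::linorder) \<Rightarrow> bool" where
  "monotonic_on S \<phi> \<longleftrightarrow>
     (\<forall>x\<in>S. \<forall>y\<in>S. x \<le> y \<longrightarrow> \<phi> x \<le> \<phi> y) \<or> (\<forall>x\<in>S. \<forall>y\<in>S. x \<le> y \<longrightarrow> \<phi> y \<le> \<phi> x)"

lemma monotonic_on_subset: "monotonic_on T \<phi> \<Longrightarrow> S \<subseteq> T \<Longrightarrow> monotonic_on S \<phi>"
  unfolding monotonic_on_def by blast

lemma monotonic_on_comp:
  assumes "monotonic_on S \<phi>" and "\<phi> ` S \<subseteq> T" and "monotonic_on T \<psi>"
  shows "monotonic_on S (\<psi> \<circ> \<phi>)"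
  using assms unfolding monotonic_on_def image_subset_iff comp_def
  by (elim disjE) (meson; fail)+

lemma monotonic_on_self_comp_mono:
  assumes "monotonic_on S \<phi>" and "\<phi> ` S \<subseteq> S" and "x \<in> S" "y \<in> S" "x \<le> y"
  shows "\<phi> (\<phi> x) \<le> \<phi> (\<phi> y)"
  using assms unfolding monotonic_on_def image_subset_iff by (elim disjE) (meson; fail)+

lemma monotonic_on_between:
  assumes "monotonic_on S \<phi>" and "x \<in> S" "z \<in> S" "t \<in> S" and "min x z \<le> t" "t \<le> max x z"
  shows "min (\<phi> x) (\<phi> z) \<le> \<phi> t \<and> \<phi> t \<le> max (\<phi> x) (\<phi> z)"
  using assms unfolding monotonic_on_def min_le_iff_disj le_max_iff_disj
  by (elim disjE) (meson linear; fail)+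

text \<open>Iterating from the least point of \<open>K\<close> gives an increasing sequence, whose limit is fixed.\<close>
lemma mono_self_map_compact_fixed_point:
  fixes \<phi> :: "real \<Rightarrow> real"
  assumes "compact K" "K \<noteq> {}" "continuous_on K \<phi>" "\<phi> ` K \<subseteq> K"
    and mono: "\<And>x y. x \<in> K \<Longrightarrow> y \<in> K \<Longrightarrow> x \<le> y \<Longrightarrow> \<phi> x \<le> \<phi> y"
  obtains l where "l \<in> K" "\<phi> l = l"
proof -
  obtain x0 where x0: "x0 \<in> K" "\<forall>y\<in>K. x0 \<le> y"
    using continuous_attains_inf[OF assms(1,2), of "\<lambda>x. x"] by auto
  define t where "t n = (\<phi> ^^ n) x0" for n
  have tK: "t n \<in> K" for n
    unfolding t_def by (induction n) (use x0 assms(4) in auto)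
  have t_Suc: "t (Suc n) = \<phi> (t n)" for n unfolding t_def by simp
  have "t n \<le> t (Suc n)" for n
  proof (induction n)
    case 0 then show ?case using x0 tK[of 1] by (simp add: t_def)
  next
    case (Suc n) then show ?case using mono[OF tK tK] t_Suc by metis
  qed
  then have "incseq t" by (simp add: incseq_SucI)
  moreover have "bdd_above (range t)"
    using tK compact_imp_bounded[OF assms(1)]
      by (meson bounded_imp_bdd_above bdd_above_mono image_subset_iff)
  ultimately have lim: "t \<longlonglongrightarrow> (SUP i. t i)" by (rule LIMSEQ_incseq_SUP[rotated])
  have lK: "(SUP i. t i) \<in> K"
    using closed_sequentially[OF compact_imp_closed[OF assms(1)] tK lim] .
  have "(\<lambda>n. \<phi> (t n)) \<longlonglongrightarrow> \<phi> (SUP i. t i)"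
    using continuous_on_tendsto_compose[OF assms(3) lim lK] tK by simp
  moreover have "(\<lambda>n. \<phi> (t n)) \<longlonglongrightarrow> (SUP i. t i)"
    unfolding t_Suc[symmetric] using lim by (rule LIMSEQ_Suc)
  ultimately have "\<phi> (SUP i. t i) = (SUP i. t i)" by (rule LIMSEQ_unique)
  then show ?thesis using lK that by blast
qed

section \<open>Horseshoes\<close>

locale horseshoe =
  fixes f :: "real \<Rightarrow> real" and u p v :: real
  assumes isCont_f: "\<And>x. isCont f x"
    and u_less_p: "u < p" and p_less_v: "p < v"
    and left_lap_covers: "{u..v} \<subseteq> (f ^^ 2) ` {u..p}"
    and right_lap_covers: "{u..v} \<subseteq> (f ^^ 2) ` {p..v}"
    and turning_point_escapes: "(f ^^ 2) p \<notin> {u..v}"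
    and mono_left_lap: "\<And>x y. u \<le> x \<Longrightarrow> x \<le> y \<Longrightarrow> y \<le> p \<Longrightarrow> (f ^^ 2) x \<le> (f ^^ 2) y"
    and antimono_right_lap: "\<And>x y. p \<le> x \<Longrightarrow> x \<le> y \<Longrightarrow> y \<le> v \<Longrightarrow> (f ^^ 2) y \<le> (f ^^ 2) x"
begin

definition g :: "real \<Rightarrow> real" where "g = f ^^ 2"

lemma isCont_g_pow: "isCont (g ^^ n) x"
  unfolding g_def by (intro isCont_funpow isCont_f)

lemma g_pow_eq: "g ^^ n = f ^^ (2 * n)"
  unfolding g_def by (simp add: funpow_mult mult.commute)

lemma g_pow_Suc: "(g ^^ Suc n) x = (g ^^ n) (g x)"
  by (simp add: funpow_Suc_right del: funpow.simps)

lemma g_pow_add: "(g ^^ (n + m)) x = (g ^^ n) ((g ^^ m) x)"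
  by (simp add: funpow_add)

subsection \<open>Itineraries and Block--Coppel chaos\<close>

definition lap :: "bool \<Rightarrow> real set" where
  "lap b = (if b then {p..v} else {u..p})"

lemma lap_subset: "lap b \<subseteq> {u..v}"
  unfolding lap_def using u_less_p p_less_v by auto

lemma closed_lap: "closed (lap b)"
  unfolding lap_def by auto

lemma lap_covers: "{u..v} \<subseteq> g ` lap b"
  unfolding lap_def g_def using left_lap_covers right_lap_covers by auto

lemma lap_between: "a \<in> lap b \<Longrightarrow> c \<in> lap b \<Longrightarrow> min a c \<le> t \<Longrightarrow> t \<le> max a c \<Longrightarrow> t \<in> lap b"
  unfolding lap_def by (cases b) (auto simp: min_def max_def split: if_splits)

lemma monotonic_on_lap: "monotonic_on (lap b) g"
  unfolding monotonic_on_def lap_def g_def using mono_left_lap antimono_right_lap by (cases b) auto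

definition cyl :: "nat \<Rightarrow> (nat \<Rightarrow> bool) \<Rightarrow> real set" where
  "cyl n \<alpha> = {x. \<forall>i<n. (g ^^ i) x \<in> lap (\<alpha> i)}"

definition fibre :: "(nat \<Rightarrow> bool) \<Rightarrow> real set" where
  "fibre \<alpha> = {x. \<forall>i. (g ^^ i) x \<in> lap (\<alpha> i)}"

definition trapped :: "real set" where
  "trapped = {x. \<forall>i. (g ^^ i) x \<in> {u..v}}"

definition itin :: "real \<Rightarrow> nat \<Rightarrow> bool" where
  "itin x = (\<lambda>i. (g ^^ i) x \<in> {p..v})"

lemma closed_cyl: "closed (cyl n \<alpha>)"
proof -
  have "cyl n \<alpha> = (\<Inter>i\<in>{..<n}. (g ^^ i) -` lap (\<alpha> i))" unfolding cyl_def by auto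
  then show ?thesis
    by (auto intro!: closed_INT continuous_closed_vimage simp: isCont_g_pow closed_lap)
qed

lemma fibre_eq_Inter_cyl: "fibre \<alpha> = (\<Inter>n. cyl n \<alpha>)"
  unfolding fibre_def cyl_def by auto

lemma closed_fibre: "closed (fibre \<alpha>)"
  unfolding fibre_eq_Inter_cyl by (intro closed_INT ballI closed_cyl)

lemma cyl_antimono: "m \<le> n \<Longrightarrow> cyl n \<alpha> \<subseteq> cyl m \<alpha>"
  unfolding cyl_def by auto

lemma cyl_Suc: "cyl (Suc n) \<alpha> = {x \<in> lap (\<alpha> 0). g x \<in> cyl n (shift \<alpha>)}"
  unfolding cyl_def shift_def All_less_Suc2 g_pow_Suc by simp

lemma image_cyl: "(g ^^ n) ` cyl (Suc n) \<alpha> = lap (\<alpha> n)"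
proof (induction n arbitrary: \<alpha>)
  case 0
  then show ?case by (auto simp: cyl_def)
next
  case (Suc n)
  have "cyl (Suc n) (shift \<alpha>) \<subseteq> g ` lap (\<alpha> 0)"
    using cyl_antimono[of 1 "Suc n"] lap_subset lap_covers by (fastforce simp: cyl_def)
  then have "g ` cyl (Suc (Suc n)) \<alpha> = cyl (Suc n) (shift \<alpha>)"
    unfolding cyl_Suc[of "Suc n"] by blast
  then have "(g ^^ n) ` g ` cyl (Suc (Suc n)) \<alpha> = lap (\<alpha> (Suc n))"
    using Suc.IH[of "shift \<alpha>"] by (simp add: shift_def)
  then show ?case by (simp add: image_image g_pow_Suc del: funpow.simps)
qed

lemma cyl_nonempty: "cyl n \<alpha> \<noteq> {}"
proof -
  have "lap (\<alpha> n) \<noteq> {}" unfolding lap_def using u_less_p p_less_v by auto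
  then have "cyl (Suc n) \<alpha> \<noteq> {}" using image_cyl[of n \<alpha>] by auto
  then show ?thesis using cyl_antimono[of n "Suc n" \<alpha>] by auto
qed

lemma closed_meets_fibre:
  assumes "closed C" and "\<And>n. C \<inter> cyl n \<alpha> \<noteq> {}"
  shows "C \<inter> fibre \<alpha> \<noteq> {}"
proof -
  define S where "S n = C \<inter> cyl (Suc n) \<alpha>" for n
  have "closed (S n)" for n unfolding S_def by (intro closed_Int assms(1) closed_cyl)
  moreover have "S n \<noteq> {}" for n unfolding S_def by (rule assms(2))
  moreover have "S n \<subseteq> S m" if "m \<le> n" for m n
    unfolding S_def using cyl_antimono[of "Suc m" "Suc n"] that by auto
  moreover have "bounded (S 0)"
    by (rule bounded_subset[OF bounded_closed_interval, of _ u v])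
       (use lap_subset in \<open>auto simp: S_def cyl_def\<close>)
  ultimately obtain a where a: "\<And>n. a \<in> S n" using bounded_closed_nest[of S] by blast
  have "a \<in> cyl n \<alpha>" for n using a[of n] cyl_antimono[of n "Suc n" \<alpha>] unfolding S_def by auto
  then have "a \<in> C \<inter> fibre \<alpha>" using a[of 0] unfolding S_def fibre_eq_Inter_cyl by blast
  then show ?thesis by blast
qed

lemma fibre_nonempty: "fibre \<alpha> \<noteq> {}"
  using closed_meets_fibre[of UNIV \<alpha>] cyl_nonempty by auto

lemma fibre_Suc: "fibre \<alpha> = {x \<in> lap (\<alpha> 0). g x \<in> fibre (shift \<alpha>)}"
proof (intro set_eqI iffI)
  fix x assume "x \<in> fibre \<alpha>"
  then have x: "(g ^^ i) x \<in> lap (\<alpha> i)" for i unfolding fibre_def by blast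
  have "(g ^^ i) (g x) \<in> lap (shift \<alpha> i)" for i
    using x[of "Suc i"] by (simp add: g_pow_Suc shift_def del: funpow.simps)
  then show "x \<in> {x \<in> lap (\<alpha> 0). g x \<in> fibre (shift \<alpha>)}"
    using x[of 0] unfolding fibre_def by simp
next
  fix x assume x: "x \<in> {x \<in> lap (\<alpha> 0). g x \<in> fibre (shift \<alpha>)}"
  have "(g ^^ i) x \<in> lap (\<alpha> i)" for i
  proof (cases i)
    case (Suc j)
    then show ?thesis using x unfolding fibre_def shift_def
      by (simp add: g_pow_Suc del: funpow.simps)
  qed (use x in simp)
  then show "x \<in> fibre \<alpha>" unfolding fibre_def by blast
qed

lemma trapped_subset: "trapped \<subseteq> {u..v}"
proof
  fix x assume "x \<in> trapped"
  then have "(g ^^ 0) x \<in> {u..v}" unfolding trapped_def by blast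
  then show "x \<in> {u..v}" by simp
qed

lemma compact_trapped: "compact trapped"
proof -
  have "trapped = (\<Inter>i. (g ^^ i) -` {u..v})" unfolding trapped_def by auto
  then have "closed trapped"
    by (auto intro!: closed_INT continuous_closed_vimage simp: isCont_g_pow)
  then show ?thesis
    using trapped_subset by (meson bounded_closed_interval bounded_subset compact_eq_bounded_closed)
qed

lemma g_trapped: "x \<in> trapped \<Longrightarrow> g x \<in> trapped"
  unfolding trapped_def by (auto simp: g_pow_Suc[symmetric] simp del: funpow.simps)

lemma g_pow_trapped: "x \<in> trapped \<Longrightarrow> (g ^^ n) x \<in> trapped"
  by (induction n) (auto simp: g_trapped)

lemma p_notin_trapped: "p \<notin> trapped"
  using g_trapped[of p] trapped_subset turning_point_escapes unfolding g_def by blast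

lemma lap_itin: "x \<in> trapped \<Longrightarrow> (g ^^ i) x \<in> lap (itin x i)"
  unfolding trapped_def lap_def itin_def by auto

lemma fibre_iff: "x \<in> fibre \<alpha> \<longleftrightarrow> x \<in> trapped \<and> itin x = \<alpha>"
proof
  assume x: "x \<in> fibre \<alpha>"
  then have "x \<in> trapped" unfolding fibre_def trapped_def using lap_subset by blast
  moreover have "itin x i = \<alpha> i" for i
  proof -
    have "(g ^^ i) x \<in> lap (\<alpha> i)" using x unfolding fibre_def by blast
    moreover have "(g ^^ i) x \<noteq> p"
      using g_pow_trapped[OF \<open>x \<in> trapped\<close>, of i] p_notin_trapped by auto
    ultimately show ?thesis unfolding itin_def lap_def by (cases "\<alpha> i") auto
  qed
  ultimately show "x \<in> trapped \<and> itin x = \<alpha>" by auto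
qed (auto simp: fibre_def lap_itin)

lemma trapped_in_cyl:
  assumes "x \<in> trapped" "\<forall>i<n. itin x i = \<alpha> i"
  shows "x \<in> cyl n \<alpha>"
proof -
  have "(g ^^ i) x \<in> lap (\<alpha> i)" if "i < n" for i
    using lap_itin[OF assms(1), of i] assms(2) that by simp
  then show ?thesis unfolding cyl_def by blast
qed

lemma itin_g_pow: "itin ((g ^^ n) x) i = itin x (i + n)"
  unfolding itin_def by (simp add: g_pow_add)

lemma itin_g: "itin (g x) = shift (itin x)"
  unfolding itin_def shift_def by (simp add: g_pow_Suc funpow_swap1)

lemma itin_surj: "itin ` trapped = UNIV"
proof -
  have "\<alpha> \<in> itin ` trapped" for \<alpha>
  proof -
    obtain x where "x \<in> fibre \<alpha>" using fibre_nonempty by blast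
    then show ?thesis using fibre_iff by (metis image_eqI)
  qed
  then show ?thesis by blast
qed

definition sep :: real where "sep = infdist p trapped"

lemma sep_pos: "0 < sep"
  unfolding sep_def using compact_trapped fibre_nonempty fibre_iff p_notin_trapped
  by (intro infdist_pos_not_in_closed) (auto intro: compact_imp_closed)

text \<open>Points with different symbols lie on opposite sides of \<open>p\<close>.\<close>
lemma sep_le_dist:
  assumes "x \<in> trapped" "y \<in> trapped" "itin x i \<noteq> itin y i"
  shows "sep \<le> dist ((g ^^ i) x) ((g ^^ i) y)"
proof -
  have x: "(g ^^ i) x \<in> trapped" and y: "(g ^^ i) y \<in> trapped"
    using assms g_pow_trapped by auto
  have "sep \<le> dist p ((g ^^ i) x)" "sep \<le> dist p ((g ^^ i) y)"
    unfolding sep_def using x y by (auto intro: infdist_le)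
  moreover have "(g ^^ i) x \<in> {u..v}" "(g ^^ i) y \<in> {u..v}" using x y trapped_subset by auto
  then have "(g ^^ i) x < p \<and> p \<le> (g ^^ i) y \<or> (g ^^ i) y < p \<and> p \<le> (g ^^ i) x"
    using assms(3) unfolding itin_def by auto
  ultimately show ?thesis unfolding dist_real_def by linarith
qed

lemma continuous_itin:
  assumes "y \<in> trapped" "0 < e"
  shows "\<exists>d>0. \<forall>z\<in>trapped. dist z y < d \<longrightarrow> sigma_dist (itin z) (itin y) < e"
proof -
  obtain N where N: "(1/2::real) ^ N < e / 2"
    using real_arch_pow_inv[of "e / 2" "1 / 2"] assms(2) by auto
  have "\<forall>\<^sub>F z in at y. \<forall>i\<in>{..<N}. dist ((g ^^ i) z) ((g ^^ i) y) < sep"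
    using isCont_g_pow sep_pos
      by (intro eventually_ball_finite) (auto intro: tendstoD simp: isCont_def)
  then obtain d where d: "d > 0"
    "\<And>z. z \<noteq> y \<Longrightarrow> dist z y < d \<Longrightarrow> \<forall>i<N. dist ((g ^^ i) z) ((g ^^ i) y) < sep"
    unfolding eventually_at by auto
  have "sigma_dist (itin z) (itin y) < e" if z: "z \<in> trapped" "dist z y < d" for z
  proof -
    have "\<forall>i<N. itin z i = itin y i"
    proof (cases "z = y")
      case False
      then show ?thesis using d(2)[OF False z(2)] sep_le_dist[OF z(1) assms(1)] by (meson not_le)
    qed simp
    then have "sigma_dist (itin z) (itin y) \<le> 2 * (1/2) ^ N" by (rule sigma_dist_le_if_prefix_eq)
    then show ?thesis using N by linarith
  qed
  then show ?thesis using d(1) by blast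
qed

lemma BC_chaotic:
  assumes "{u..v} \<subseteq> X"
  shows "BC_chaotic X f"
  unfolding BC_chaotic_def
proof (intro exI[of _ 2] conjI exI[of _ trapped] exI[of _ itin])
  show "trapped \<subseteq> X" using trapped_subset assms by blast
  show "(f ^^ 2) ` trapped \<subseteq> trapped" using g_trapped unfolding g_def by auto
  show "\<forall>y\<in>trapped. itin ((f ^^ 2) y) = shift (itin y)" using itin_g unfolding g_def by blast
  show "\<forall>y\<in>trapped. \<forall>e>0. \<exists>d>0. \<forall>z\<in>trapped. dist z y < d \<longrightarrow> sigma_dist (itin z) (itin y) < e"
    using continuous_itin by blast
qed (simp_all add: compact_trapped itin_surj)

subsection \<open>Thin fibres and Li--Yorke chaos\<close>

lemma fibre_between:
  assumes "x \<in> fibre \<alpha>" "z \<in> fibre \<alpha>" "x \<le> t" "t \<le> z"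
  shows "t \<in> fibre \<alpha>"
proof -
  have x: "(g ^^ i) x \<in> lap (\<alpha> i)" and z: "(g ^^ i) z \<in> lap (\<alpha> i)" for i
    using assms(1,2) unfolding fibre_def by auto
  have "min ((g ^^ i) x) ((g ^^ i) z) \<le> (g ^^ i) t \<and>
      (g ^^ i) t \<le> max ((g ^^ i) x) ((g ^^ i) z)" for i
  proof (induction i)
    case 0
    then show ?case using assms(3,4) by simp
  next
    case (Suc i)
    then have "(g ^^ i) t \<in> lap (\<alpha> i)" using lap_between[OF x z] by blast
    then show ?case using monotonic_on_between[OF monotonic_on_lap x z] Suc by simp
  qed
  then show ?thesis unfolding fibre_def using lap_between[OF x z] by blast
qed

definition thick :: "(nat \<Rightarrow> bool) set" where
  "thick = {\<alpha>. \<exists>x y. x \<in> fibre \<alpha> \<and> y \<in> fibre \<alpha> \<and> x < y}"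

text \<open>A thick fibre is a nondegenerate interval and so contains a rational; fibres are disjoint.\<close>
lemma countable_thick: "countable thick"
proof -
  define q where "q \<alpha> = (SOME r. r \<in> \<rat> \<and> r \<in> fibre \<alpha>)" for \<alpha>
  have q: "q \<alpha> \<in> \<rat> \<and> q \<alpha> \<in> fibre \<alpha>" if \<alpha>: "\<alpha> \<in> thick" for \<alpha>
  proof -
    obtain x y where xy: "x \<in> fibre \<alpha>" "y \<in> fibre \<alpha>" "x < y" using \<alpha> unfolding thick_def by blast
    obtain r where r: "r \<in> \<rat>" "x < r" "r < y" using Rats_dense_in_real[OF xy(3)] by blast
    then have "r \<in> fibre \<alpha>" using fibre_between[OF xy(1,2)] by simp
    then have "\<exists>r. r \<in> \<rat> \<and> r \<in> fibre \<alpha>" using r(1) by blast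
    then show ?thesis unfolding q_def by (rule someI_ex)
  qed
  have "inj_on q thick"
  proof (rule inj_onI)
    fix \<alpha> \<beta> assume "\<alpha> \<in> thick" "\<beta> \<in> thick" "q \<alpha> = q \<beta>"
    then have "q \<alpha> \<in> fibre \<alpha>" "q \<alpha> \<in> fibre \<beta>" using q by metis+
    then show "\<alpha> = \<beta>" by (auto simp: fibre_iff)
  qed
  moreover have "countable (q ` thick)"
    using q countable_rat by (blast intro: countable_subset)
  ultimately show ?thesis by (blast intro: countable_image_inj_on)
qed

lemma thin_fibre:
  assumes "\<alpha> \<notin> thick"
  obtains x where "fibre \<alpha> = {x}"
proof -
  obtain x where x: "x \<in> fibre \<alpha>" using fibre_nonempty by blast
  have "y = x" if "y \<in> fibre \<alpha>" for y
    using assms x that unfolding thick_def by (cases y x rule: linorder_cases) auto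
  then show ?thesis using x that by blast
qed

lemma thin_fibre_cyl_near:
  assumes "fibre \<alpha> = {x0}" "0 < e"
  shows "\<exists>L\<ge>M. \<forall>y\<in>trapped. (\<forall>i<L. itin y i = \<alpha> i) \<longrightarrow> dist y x0 < e"
proof (rule ccontr)
  assume far: "\<not> ?thesis"
  have "- ball x0 e \<inter> cyl n \<alpha> \<noteq> {}" for n
  proof -
    have "\<forall>L\<ge>M. \<exists>y\<in>trapped. (\<forall>i<L. itin y i = \<alpha> i) \<and> \<not> dist y x0 < e"
      using far by blast
    then obtain y where y: "y \<in> trapped" "\<forall>i<max n M. itin y i = \<alpha> i" "\<not> dist y x0 < e"
      by (meson max.cobounded2)
    then have "y \<in> cyl n \<alpha>" by (intro trapped_in_cyl) auto
    moreover have "y \<notin> ball x0 e" using y(3) by (simp add: dist_commute)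
    ultimately show ?thesis by blast
  qed
  then have "- ball x0 e \<inter> fibre \<alpha> \<noteq> {}" by (intro closed_meets_fibre) auto
  then show False using assms by auto
qed

definition point_of :: "(nat \<Rightarrow> bool) \<Rightarrow> real" where
  "point_of \<alpha> = (SOME x. x \<in> fibre \<alpha>)"

lemma point_of_trapped: "point_of \<alpha> \<in> trapped" and itin_point_of: "itin (point_of \<alpha>) = \<alpha>"
proof -
  have "point_of \<alpha> \<in> fibre \<alpha>" unfolding point_of_def using fibre_nonempty by (simp add: some_in_eq)
  then show "point_of \<alpha> \<in> trapped" "itin (point_of \<alpha>) = \<alpha>" using fibre_iff by auto
qed

lemma limsup_dist_pos_if_frequently_g_pow_ge:
  assumes "0 < d" and "\<exists>\<^sub>F i in sequentially. d \<le> dist ((g ^^ i) x) ((g ^^ i) y)"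
  shows "0 < limsup (\<lambda>n. ereal (dist ((f ^^ n) x) ((f ^^ n) y)))"
proof (rule limsup_pos_if_frequently_ge[OF assms(1)], unfold frequently_sequentially, intro allI)
  fix N
  obtain i where "i \<ge> N" "d \<le> dist ((g ^^ i) x) ((g ^^ i) y)"
    using assms(2) unfolding frequently_sequentially by blast
  then show "\<exists>n\<ge>N. d \<le> dist ((f ^^ n) x) ((f ^^ n) y)"
    by (intro exI[of _ "2 * i"]) (simp add: g_pow_eq)
qed

lemma limsup_dist_pos_if_frequently_itin_ne:
  assumes "x \<in> trapped" "y \<in> trapped" "\<exists>\<^sub>F i in sequentially. itin x i \<noteq> itin y i"
  shows "0 < limsup (\<lambda>n. ereal (dist ((f ^^ n) x) ((f ^^ n) y)))"
  using assms(3) sep_le_dist[OF assms(1,2)]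
  by (intro limsup_dist_pos_if_frequently_g_pow_ge[OF sep_pos]) (auto elim: frequently_elim1)

text \<open>Under \<open>g ^^ (2 ^ j + 1)\<close> every coded point lands in a long cylinder around the thin
  fibre of \<open>\<gamma>\<close>.\<close>
lemma liminf_dist_scramble_code:
  assumes "fibre \<gamma> = {w}"
  shows "liminf (\<lambda>n. ereal (dist ((f ^^ n) (point_of (scramble_code \<gamma> \<alpha>)))
                                 ((f ^^ n) (point_of (scramble_code \<gamma> \<beta>))))) = 0"
proof (rule liminf_eq_0_if_frequently_lt, simp, unfold frequently_sequentially, intro allI)
  fix e :: real and N :: nat assume "0 < e"
  obtain L where L: "\<forall>y\<in>trapped. (\<forall>i<L. itin y i = \<gamma> i) \<longrightarrow> dist y w < e / 2"
    using thin_fibre_cyl_near[OF assms, of "e / 2" 0] \<open>0 < e\<close> by auto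
  define j where "j = L + N + 1"
  define n :: nat where "n = 2 ^ j + 1"
  have "j < 2 ^ j" by (rule less_exp)
  have near: "dist ((g ^^ n) (point_of (scramble_code \<gamma> \<alpha>'))) w < e / 2" for \<alpha>'
  proof -
    have "itin ((g ^^ n) (point_of (scramble_code \<gamma> \<alpha>'))) i = \<gamma> i" if "i < L" for i
    proof -
      have "i < 2 ^ j - 1" using that \<open>j < 2 ^ j\<close> unfolding j_def by simp
      then show ?thesis
        using scramble_code_block[of j i] unfolding itin_g_pow itin_point_of n_def j_def
        by (simp add: add.commute add.left_commute)
    qed
    then show ?thesis using L g_pow_trapped[OF point_of_trapped] by blast
  qed
  have "dist ((f ^^ (2 * n)) (point_of (scramble_code \<gamma> \<alpha>)))
             ((f ^^ (2 * n)) (point_of (scramble_code \<gamma> \<beta>))) < e"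
    using near[of \<alpha>] near[of \<beta>] dist_triangle_half_l unfolding g_pow_eq by blast
  moreover have "N \<le> 2 * n" using \<open>j < 2 ^ j\<close> unfolding n_def j_def by simp
  ultimately show "\<exists>n\<ge>N. dist ((f ^^ n) (point_of (scramble_code \<gamma> \<alpha>)))
                           ((f ^^ n) (point_of (scramble_code \<gamma> \<beta>))) < e" by blast
qed

lemma periodic_pt_g_pow:
  assumes "periodic_pt f q"
  obtains m where "0 < m" "(g ^^ m) q = q"
proof -
  obtain m where m: "0 < m" "(f ^^ m) q = q" using assms unfolding periodic_pt_def by blast
  then have "(g ^^ m) q = q" unfolding g_pow_eq using funpow_mult_fixpoint[where t = 2, OF m(2)]
    by (simp add: mult.commute)
  then show ?thesis using m(1) that by blast
qed

lemma limsup_dist_periodic_pos: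
  assumes "x \<in> trapped" "\<not> eventually_periodic (itin x)" "periodic_pt f q"
  shows "0 < limsup (\<lambda>n. ereal (dist ((f ^^ n) x) ((f ^^ n) q)))"
proof -
  obtain m where m: "0 < m" "(g ^^ m) q = q" using periodic_pt_g_pow[OF assms(3)] .
  have q_period: "(g ^^ (i + t * m)) q = (g ^^ i) q" for i t
    using g_pow_add[of i "t * m"] funpow_mult_fixpoint[OF m(2)] by (simp add: add.commute)
  show ?thesis
  proof (cases "q \<in> trapped")
    case True
    have "itin q (i + m) = itin q i" for i using itin_g_pow[of m q i] m(2) by simp
    then have "\<exists>\<^sub>F i in sequentially. itin x i \<noteq> itin q i"
      using assms(2) m(1) unfolding eventually_periodic_def frequently_sequentially
      by (metis le_add1 order.trans not_le)
    then show ?thesis by (rule limsup_dist_pos_if_frequently_itin_ne[OF assms(1) True])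
  next
    case False
    then obtain i0 where i0: "(g ^^ i0) q \<notin> {u..v}" unfolding trapped_def by blast
    define d where "d = infdist ((g ^^ i0) q) {u..v}"
    have "0 < d" unfolding d_def using i0 u_less_p p_less_v
      by (intro infdist_pos_not_in_closed) auto
    moreover have "\<exists>\<^sub>F i in sequentially. d \<le> dist ((g ^^ i) x) ((g ^^ i) q)"
      unfolding frequently_sequentially
    proof
      fix N
      have "(g ^^ (i0 + N * m)) x \<in> {u..v}" using g_pow_trapped[OF assms(1)] trapped_subset by blast
      then have "d \<le> dist ((g ^^ (i0 + N * m)) x) ((g ^^ (i0 + N * m)) q)"
        unfolding d_def q_period by (simp add: infdist_le dist_commute)
      moreover have "N \<le> i0 + N * m" using m(1) by (simp add: trans_le_add2)
      ultimately show "\<exists>i\<ge>N. d \<le> dist ((g ^^ i) x) ((g ^^ i) q)" by blast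
    qed
    ultimately show ?thesis by (rule limsup_dist_pos_if_frequently_g_pow_ge)
  qed
qed

lemma LY_chaotic:
  assumes "{u..v} \<subseteq> X"
  shows "LY_chaotic X f"
proof -
  obtain \<gamma> where "\<gamma> \<notin> thick" using ex_cylinder_notin_countable[OF countable_thick, of 0] by metis
  then obtain w where w: "fibre \<gamma> = {w}" using thin_fibre by blast
  define P where "P \<alpha> = point_of (scramble_code \<gamma> \<alpha>)" for \<alpha>
  define A where "A = {\<alpha>. \<not> eventually_periodic (scramble_code \<gamma> \<alpha>)}"
  have itin_P: "itin (P \<alpha>) = scramble_code \<gamma> \<alpha>" for \<alpha> unfolding P_def by (rule itin_point_of)
  have "inj P" by (metis injI inj_scramble_code[of \<gamma>] itin_P inj_eq)
  then have "uncountable (P ` A)"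
    using uncountable_not_eventually_periodic_scramble_codes[of \<gamma>] countable_image_inj_on
    unfolding A_def by (metis inj_on_subset subset_UNIV)
  moreover have "P ` A \<subseteq> X" using point_of_trapped trapped_subset assms unfolding P_def by blast
  ultimately show ?thesis unfolding LY_chaotic_def
  proof (intro exI[of _ "P ` A"] conjI ballI impI)
    fix x y assume "x \<in> P ` A" "y \<in> P ` A" "x \<noteq> y"
    then obtain \<alpha> \<beta> where xy: "x = P \<alpha>" "y = P \<beta>" and "\<alpha> \<noteq> \<beta>" by blast
    then obtain k where "\<alpha> k \<noteq> \<beta> k" by blast
    then have "\<exists>\<^sub>F i in sequentially. itin x i \<noteq> itin y i"
      unfolding frequently_sequentially xy itin_P using scramble_code_differ_frequently by blast
    then show "0 < limsup (\<lambda>n. ereal (dist ((f ^^ n) x) ((f ^^ n) y)))"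
      using limsup_dist_pos_if_frequently_itin_ne point_of_trapped xy unfolding P_def by blast
    show "liminf (\<lambda>n. ereal (dist ((f ^^ n) x) ((f ^^ n) y))) = 0"
      unfolding xy P_def by (rule liminf_dist_scramble_code[OF w])
  next
    fix x q assume "x \<in> P ` A" "periodic_pt f q"
    then show "0 < limsup (\<lambda>n. ereal (dist ((f ^^ n) x) ((f ^^ n) q)))"
      using limsup_dist_periodic_pos point_of_trapped itin_P unfolding A_def P_def by auto
  qed auto
qed

subsection \<open>Devaney chaos\<close>

definition thin_points :: "real set" where
  "thin_points = {x \<in> trapped. itin x \<notin> thick}"

definition core :: "real set" where
  "core = closure thin_points"

text \<open>\<open>core\<close> is only invariant under \<open>g = f ^^ 2\<close>; adding its image makes it \<open>f\<close>-invariant.\<close>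
definition orbit_core :: "real set" where
  "orbit_core = core \<union> f ` core"

lemma thin_point_trapped: "x \<in> thin_points \<Longrightarrow> x \<in> trapped"
  by (simp add: thin_points_def)

lemma thin_point_in_core: "x \<in> thin_points \<Longrightarrow> x \<in> core"
  unfolding core_def using closure_subset by blast

lemma fibre_itin_thin_point:
  assumes "x \<in> thin_points"
  shows "fibre (itin x) = {x}"
proof -
  obtain y where "fibre (itin x) = {y}" using thin_fibre assms unfolding thin_points_def by blast
  moreover have "x \<in> fibre (itin x)" using assms fibre_iff unfolding thin_points_def by blast
  ultimately show ?thesis by simp
qed

lemma thin_point_cyl_near:
  "x0 \<in> thin_points \<Longrightarrow> 0 < e \<Longrightarrow> \<exists>L\<ge>M. \<forall>y\<in>trapped. (\<forall>i<L. itin y i = itin x0 i) \<longrightarrow> dist y x0 < e"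
  by (rule thin_fibre_cyl_near[OF fibre_itin_thin_point])

lemma ex_thin_point_prefix: "\<exists>y\<in>thin_points. \<forall>i<L. itin y i = w i"
proof -
  obtain \<beta> where \<beta>: "\<forall>i<L. \<beta> i = w i" "\<beta> \<notin> thick"
    by (rule ex_cylinder_notin_countable[OF countable_thick])
  obtain y where "y \<in> fibre \<beta>" using fibre_nonempty by blast
  then show ?thesis using \<beta> fibre_iff unfolding thin_points_def by auto
qed

lemma thick_if_shift_thick: "shift \<alpha> \<in> thick \<Longrightarrow> \<alpha> \<in> thick"
proof -
  assume "shift \<alpha> \<in> thick"
  then obtain y1 y2 where y: "y1 \<in> fibre (shift \<alpha>)" "y2 \<in> fibre (shift \<alpha>)" "y1 < y2"
    unfolding thick_def by blast
  then have "y1 \<in> {u..v}" "y2 \<in> {u..v}" using fibre_iff trapped_subset by auto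
  then obtain x1 x2 where "x1 \<in> lap (\<alpha> 0)" "g x1 = y1" "x2 \<in> lap (\<alpha> 0)" "g x2 = y2"
    using lap_covers[of "\<alpha> 0"] by blast
  then have "x1 \<in> fibre \<alpha>" "x2 \<in> fibre \<alpha>" "x1 \<noteq> x2" using y unfolding fibre_Suc[of \<alpha>] by auto
  then show "\<alpha> \<in> thick" unfolding thick_def using linorder_neq_iff by blast
qed

lemma g_thin_points: "x \<in> thin_points \<Longrightarrow> g x \<in> thin_points"
  unfolding thin_points_def using g_trapped itin_g thick_if_shift_thick by auto

lemma core_subset_trapped: "core \<subseteq> trapped"
  unfolding core_def thin_points_def
  using compact_imp_closed[OF compact_trapped] by (intro closure_minimal) auto

lemma compact_core: "compact core"
proof -
  have "compact (trapped \<inter> core)"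
    by (rule compact_Int_closed[OF compact_trapped]) (simp add: core_def)
  then show ?thesis using core_subset_trapped by (simp add: Int_absorb1)
qed

lemma g_core: "g ` core \<subseteq> core"
  unfolding core_def
proof (rule image_closure_subset)
  show "continuous_on (closure thin_points) g"
    unfolding g_def by (intro continuous_at_imp_continuous_on ballI isCont_funpow isCont_f)
  show "g ` thin_points \<subseteq> closure thin_points" using g_thin_points closure_subset by blast
qed simp

lemma g_pow_core: "x \<in> core \<Longrightarrow> (g ^^ n) x \<in> core"
  by (induction n) (use g_core in auto)

lemma core_meets_fibre: "core \<inter> fibre \<alpha> \<noteq> {}"
proof -
  have "core \<inter> cyl n \<alpha> \<noteq> {}" for n
  proof -
    obtain y where y: "y \<in> thin_points" "\<forall>i<n. itin y i = \<alpha> i" using ex_thin_point_prefix by blast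
    then have "y \<in> cyl n \<alpha>" by (intro trapped_in_cyl thin_point_trapped)
    moreover have "y \<in> core" using y(1) by (rule thin_point_in_core)
    ultimately show ?thesis by blast
  qed
  then show ?thesis by (intro closed_meets_fibre) (simp_all add: core_def)
qed

lemma f_pow_core_in_orbit_core: "z \<in> core \<Longrightarrow> k \<le> 1 \<Longrightarrow> (f ^^ k) z \<in> orbit_core"
  unfolding orbit_core_def by (cases k) auto

lemma orbit_core_cases:
  assumes "q \<in> orbit_core"
  obtains z k where "z \<in> core" "k \<le> 1" "q = (f ^^ k) z"
proof (cases "q \<in> core")
  case True
  then show ?thesis using that[of q 0] by simp
next
  case False
  then obtain z where "z \<in> core" "q = f z" using assms unfolding orbit_core_def by blast
  then show ?thesis using that[of z 1] by simp
qed

lemma open_nbhd_contains_thin_ball: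
  assumes "q \<in> orbit_core" "open T" "q \<in> T"
  shows "\<exists>x0\<in>thin_points. \<exists>e>0. \<exists>k\<le>1. \<forall>z\<in>core. dist z x0 < e \<longrightarrow> (f ^^ k) z \<in> T"
proof -
  obtain z0 k where z0: "z0 \<in> core" "k \<le> 1" "q = (f ^^ k) z0" using orbit_core_cases[OF assms(1)] .
  obtain r where r: "r > 0" "ball q r \<subseteq> T" using assms(2,3) open_contains_ball by blast
  obtain s where s: "s > 0" "\<And>z. dist z z0 < s \<Longrightarrow> dist ((f ^^ k) z) q < r"
    using isCont_funpow[OF isCont_f, where n = k and x = z0] r(1)
      unfolding continuous_at_eps_delta z0(3) by blast
  obtain x0 where x0: "x0 \<in> thin_points" "dist x0 z0 < s / 2"
    using z0(1) s(1) unfolding core_def closure_approachable by (meson half_gt_zero)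
  have "(f ^^ k) z \<in> T" if "dist z x0 < s / 2" for z
  proof -
    have "dist z z0 < s" using that x0(2) dist_triangle[of z z0 x0] by linarith
    then show ?thesis using s(2) r(2) by (auto simp: dist_commute)
  qed
  then show ?thesis using x0(1) z0(2) half_gt_zero[OF s(1)] by blast
qed

lemma core_g_pow_transitive:
  assumes "x0 \<in> thin_points" "x1 \<in> thin_points" "0 < e" "0 < e'"
  obtains y L where "y \<in> core" "1 \<le> L" "dist y x0 < e" "dist ((g ^^ L) y) x1 < e'"
proof -
  obtain L where L: "L \<ge> 1" "\<forall>y\<in>trapped. (\<forall>i<L. itin y i = itin x0 i) \<longrightarrow> dist y x0 < e"
    using thin_point_cyl_near[OF assms(1,3), of 1] by blast
  obtain L' where L': "\<forall>y\<in>trapped. (\<forall>i<L'. itin y i = itin x1 i) \<longrightarrow> dist y x1 < e'"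
    using thin_point_cyl_near[OF assms(2,4), of 0] by blast
  obtain y where y: "y \<in> thin_points"
    "\<forall>i<L + L'. itin y i = (if i < L then itin x0 i else itin x1 (i - L))"
    using ex_thin_point_prefix[of "L + L'" "\<lambda>i. if i < L then itin x0 i else itin x1 (i - L)"]
    by blast
  then have "y \<in> core" "y \<in> trapped" using thin_point_in_core thin_point_trapped by auto
  have "dist y x0 < e" using L(2) y(2) \<open>y \<in> trapped\<close> by simp
  moreover have "dist ((g ^^ L) y) x1 < e'"
  proof -
    have "itin ((g ^^ L) y) i = itin x1 i" if "i < L'" for i
      using y(2)[rule_format, of "i + L"] that by (simp add: itin_g_pow)
    then show ?thesis using L' g_pow_trapped[OF \<open>y \<in> trapped\<close>] by blast
  qed
  ultimately show ?thesis using that \<open>y \<in> core\<close> L(1) by blast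
qed

lemma orbit_core_transitive:
  assumes "openin (top_of_set orbit_core) U" "U \<noteq> {}" "openin (top_of_set orbit_core) V" "V \<noteq> {}"
  shows "\<exists>n>0. (f ^^ n) ` U \<inter> V \<noteq> {}"
proof -
  obtain TU TV where T: "open TU" "U = orbit_core \<inter> TU" "open TV" "V = orbit_core \<inter> TV"
    using assms(1,3) unfolding openin_open by blast
  obtain q q' where "q \<in> U" "q' \<in> V" using assms(2,4) by blast
  obtain x0 e k where x0: "x0 \<in> thin_points" "e > 0" "k \<le> 1"
    "\<forall>z\<in>core. dist z x0 < e \<longrightarrow> (f ^^ k) z \<in> TU"
    using open_nbhd_contains_thin_ball[of q TU] \<open>q \<in> U\<close> T by blast
  obtain x1 e' k' where x1: "x1 \<in> thin_points" "e' > 0" "k' \<le> 1"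
    "\<forall>z\<in>core. dist z x1 < e' \<longrightarrow> (f ^^ k') z \<in> TV"
    using open_nbhd_contains_thin_ball[of q' TV] \<open>q' \<in> V\<close> T by blast
  obtain y L where y: "y \<in> core" "1 \<le> L" "dist y x0 < e" "dist ((g ^^ L) y) x1 < e'"
    using core_g_pow_transitive[OF x0(1) x1(1) x0(2) x1(2)] .
  have "(f ^^ k) y \<in> U" using x0 y f_pow_core_in_orbit_core T(2) by blast
  moreover have "(f ^^ k') ((g ^^ L) y) \<in> V"
    using x1 y g_pow_core f_pow_core_in_orbit_core T(4) by blast
  moreover have "(f ^^ (2 * L + k' - k)) ((f ^^ k) y) = (f ^^ k') ((g ^^ L) y)"
  proof -
    have "(f ^^ (2 * L + k' - k)) ((f ^^ k) y) = (f ^^ (2 * L + k' - k + k)) y"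
      by (simp add: funpow_add)
    also have "2 * L + k' - k + k = k' + 2 * L" using x0(3) y(2) by simp
    finally show ?thesis by (simp add: funpow_add g_pow_eq)
  qed
  ultimately have "(f ^^ (2 * L + k' - k)) ` U \<inter> V \<noteq> {}" by (metis IntI empty_iff image_eqI)
  moreover have "0 < 2 * L + k' - k" using x0(3) y(2) by simp
  ultimately show ?thesis by blast
qed

lemma monotonic_on_fibre_g_pow: "monotonic_on (fibre \<alpha>) (g ^^ n)"
proof (induction n arbitrary: \<alpha>)
  case 0
  then show ?case by (simp add: monotonic_on_def)
next
  case (Suc n)
  have "monotonic_on (fibre \<alpha>) g"
    using monotonic_on_subset[OF monotonic_on_lap] fibre_Suc[of \<alpha>] by blast
  moreover have "g ` fibre \<alpha> \<subseteq> fibre (shift \<alpha>)" using fibre_Suc[of \<alpha>] by blast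
  ultimately have "monotonic_on (fibre \<alpha>) ((g ^^ n) \<circ> g)" using Suc.IH by (rule monotonic_on_comp)
  then show ?case by (simp add: funpow_Suc_right comp_def del: funpow.simps)
qed

text \<open>The periodic itinerary repeating the first \<open>L\<close> symbols of \<open>x0\<close> has a fibre that is mapped into
  itself monotonically by \<open>g ^^ L\<close>; the square of this map has a fixed point in \<open>core\<close>.\<close>
lemma periodic_pt_near_thin_point:
  assumes "x0 \<in> thin_points" "0 < e"
  obtains q where "q \<in> core" "dist q x0 < e" "periodic_pt f q"
proof -
  obtain L where L: "L \<ge> 1" "\<forall>y\<in>trapped. (\<forall>i<L. itin y i = itin x0 i) \<longrightarrow> dist y x0 < e"
    using thin_point_cyl_near[OF assms, of 1] by blast
  define \<pi> where "\<pi> i = itin x0 (i mod L)" for i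
  define \<psi> where "\<psi> = g ^^ L"
  define K where "K = core \<inter> fibre \<pi>"
  have \<psi>_fibre: "\<psi> ` fibre \<pi> \<subseteq> fibre \<pi>"
  proof
    fix y assume "y \<in> \<psi> ` fibre \<pi>"
    then obtain x where x: "x \<in> trapped" "itin x = \<pi>" "y = \<psi> x" using fibre_iff by auto
    then have "itin y i = \<pi> i" for i by (simp add: \<psi>_def itin_g_pow \<pi>_def)
    then show "y \<in> fibre \<pi>" using x g_pow_trapped fibre_iff unfolding \<psi>_def by auto
  qed
  have "\<psi> ` K \<subseteq> K" using \<psi>_fibre g_pow_core unfolding K_def \<psi>_def by blast
  then have "(\<psi> \<circ> \<psi>) ` K \<subseteq> K" by (auto simp: image_subset_iff)
  moreover have "compact K" unfolding K_def using compact_core closed_fibre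
    by (rule compact_Int_closed)
  moreover have "K \<noteq> {}" unfolding K_def by (rule core_meets_fibre)
  moreover have "continuous_on K (\<psi> \<circ> \<psi>)"
    unfolding \<psi>_def comp_def
    by (intro continuous_at_imp_continuous_on ballI isCont_o2[OF isCont_g_pow isCont_g_pow])
  moreover have "(\<psi> \<circ> \<psi>) x \<le> (\<psi> \<circ> \<psi>) y" if "x \<in> K" "y \<in> K" "x \<le> y" for x y
    using monotonic_on_self_comp_mono[OF monotonic_on_fibre_g_pow[of \<pi> L] _ _ _ that(3)]
      \<psi>_fibre that
    unfolding K_def \<psi>_def by auto
  ultimately obtain l where l: "l \<in> K" "(\<psi> \<circ> \<psi>) l = l"
    using mono_self_map_compact_fixed_point[of K "\<psi> \<circ> \<psi>"] by blast
  then have "(g ^^ (L + L)) l = l" unfolding \<psi>_def by (simp add: g_pow_add)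
  then have "(f ^^ (2 * (L + L))) l = l" by (simp add: g_pow_eq)
  then have "periodic_pt f l" unfolding periodic_pt_def using L(1)
    by (intro exI[of _ "2 * (L + L)"]) simp
  moreover have "l \<in> trapped" "itin l = \<pi>" using l(1) fibre_iff unfolding K_def by auto
  then have "dist l x0 < e" using L(2) unfolding \<pi>_def by simp
  ultimately show ?thesis using l(1) that unfolding K_def by blast
qed

lemma periodic_dense_orbit_core: "orbit_core \<subseteq> closure {q \<in> orbit_core. periodic_pt f q}"
proof
  fix q assume q: "q \<in> orbit_core"
  show "q \<in> closure {q \<in> orbit_core. periodic_pt f q}"
    unfolding closure_approachable
  proof (intro allI impI)
    fix \<epsilon> :: real assume "0 < \<epsilon>"
    obtain x0 e k where x0: "x0 \<in> thin_points" "e > 0" "k \<le> 1"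
      "\<forall>z\<in>core. dist z x0 < e \<longrightarrow> (f ^^ k) z \<in> ball q \<epsilon>"
      using open_nbhd_contains_thin_ball[OF q, of "ball q \<epsilon>"] \<open>0 < \<epsilon>\<close> by auto
    obtain q' where q': "q' \<in> core" "dist q' x0 < e" "periodic_pt f q'"
      using periodic_pt_near_thin_point[OF x0(1,2)] .
    then show "\<exists>y\<in>{q \<in> orbit_core. periodic_pt f q}. dist y q < \<epsilon>"
      using f_pow_core_in_orbit_core[OF q'(1) x0(3)] periodic_pt_funpow[OF q'(3), of k] x0(4)
      by (auto simp: dist_commute)
  qed
qed

lemma core_sensitive:
  assumes "q \<in> core" "0 < e"
  obtains y L where "y \<in> core" "1 \<le> L" "dist q y < e" "sep \<le> dist ((g ^^ L) q) ((g ^^ L) y)"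
proof -
  obtain x0 where x0: "x0 \<in> thin_points" "dist x0 q < e / 2"
    using assms unfolding core_def closure_approachable by (meson half_gt_zero)
  obtain L where L: "L \<ge> 1" "\<forall>y\<in>trapped. (\<forall>i<L. itin y i = itin x0 i) \<longrightarrow> dist y x0 < e / 2"
    using thin_point_cyl_near[OF x0(1), of "e / 2" 1] assms(2) by auto
  obtain y where y: "y \<in> thin_points"
    "\<forall>i<Suc L. itin y i = (if i < L then itin x0 i else \<not> itin q L)"
    using ex_thin_point_prefix[of "Suc L" "\<lambda>i. if i < L then itin x0 i else \<not> itin q L"] by blast
  then have "y \<in> core" "y \<in> trapped" using thin_point_in_core thin_point_trapped by auto
  have "dist y x0 < e / 2" using L(2) y(2) \<open>y \<in> trapped\<close> by simp
  then have "dist q y < e" using dist_triangle_half_l[of q x0 e y] x0(2) by (simp add: dist_commute)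
  moreover have "itin q L \<noteq> itin y L" using y(2) by simp
  then have "sep \<le> dist ((g ^^ L) q) ((g ^^ L) y)"
    using sep_le_dist assms(1) core_subset_trapped \<open>y \<in> trapped\<close> by blast
  ultimately show ?thesis using that \<open>y \<in> core\<close> L(1) by blast
qed

lemma orbit_core_sensitive:
  assumes "x \<in> orbit_core" "0 < e"
  shows "\<exists>y\<in>orbit_core. \<exists>n. dist x y < e \<and> sep / 2 < dist ((f ^^ n) x) ((f ^^ n) y)"
proof -
  obtain z k where z: "z \<in> core" "k \<le> 1" "x = (f ^^ k) z" using orbit_core_cases[OF assms(1)] .
  obtain s where s: "s > 0" "\<And>z'. dist z' z < s \<Longrightarrow> dist ((f ^^ k) z') ((f ^^ k) z) < e"
    using isCont_funpow[OF isCont_f, where n = k and x = z] assms(2)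
      unfolding continuous_at_eps_delta by blast
  obtain y L where y: "y \<in> core" "1 \<le> L" "dist z y < s" "sep \<le> dist ((g ^^ L) z) ((g ^^ L) y)"
    using core_sensitive[OF z(1) s(1)] .
  have "(f ^^ (2 * L - k)) ((f ^^ k) w) = (g ^^ L) w" for w
  proof -
    have "(f ^^ (2 * L - k)) ((f ^^ k) w) = (f ^^ (2 * L - k + k)) w" by (simp add: funpow_add)
    also have "2 * L - k + k = 2 * L" using z(2) y(2) by simp
    finally show ?thesis by (simp add: g_pow_eq)
  qed
  then have "sep / 2 < dist ((f ^^ (2 * L - k)) x) ((f ^^ (2 * L - k)) ((f ^^ k) y))"
    using y(4) sep_pos z(3) by simp
  moreover have "(f ^^ k) y \<in> orbit_core" using f_pow_core_in_orbit_core y(1) z(2) by blast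
  moreover have "dist x ((f ^^ k) y) < e" using s(2)[of y] y(3) z(3) by (simp add: dist_commute)
  ultimately show ?thesis by blast
qed

lemma D_chaotic:
  assumes "{u..v} \<subseteq> X" "f ` X \<subseteq> X"
  shows "D_chaotic X f"
  unfolding D_chaotic_def
proof (intro exI[of _ orbit_core] conjI allI impI)
  show "orbit_core \<subseteq> X"
    using core_subset_trapped trapped_subset assms unfolding orbit_core_def by blast
  show "orbit_core \<noteq> {}" using core_meets_fibre unfolding orbit_core_def by blast
  have "continuous_on core f" by (intro continuous_at_imp_continuous_on ballI isCont_f)
  then show "compact orbit_core"
    unfolding orbit_core_def using compact_core by (intro compact_Un compact_continuous_image)
  have "f ` f ` core \<subseteq> core" using g_core unfolding g_def by (auto simp: numeral_2_eq_2)
  then show "f ` orbit_core \<subseteq> orbit_core" unfolding orbit_core_def by blast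
  show "orbit_core \<subseteq> closure {p \<in> orbit_core. periodic_pt f p}" by (rule periodic_dense_orbit_core)
  show "\<exists>\<delta>>0. \<forall>x\<in>orbit_core. \<forall>e>0. \<exists>y\<in>orbit_core. \<exists>n.
      dist x y < e \<and> \<delta> < dist ((f ^^ n) x) ((f ^^ n) y)"
    using orbit_core_sensitive sep_pos by (intro exI[of _ "sep / 2"]) auto
next
  fix U V
  assume "openin (top_of_set orbit_core) U" "openin (top_of_set orbit_core) V" "U \<noteq> {}" "V \<noteq> {}"
  then show "\<exists>n>0. (f ^^ n) ` U \<inter> V \<noteq> {}" using orbit_core_transitive by blast
qed

end

section \<open>Unimodal maps\<close>

lemma continuous_image_between_endpoints:
  fixes \<phi> :: "real \<Rightarrow> real"
  assumes "continuous_on {a..b} \<phi>" "a \<le> b" "min (\<phi> a) (\<phi> b) \<le> y" "y \<le> max (\<phi> a) (\<phi> b)"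
  shows "y \<in> \<phi> ` {a..b}"
proof (cases "\<phi> a \<le> \<phi> b")
  case True
  then show ?thesis using IVT'[of \<phi> a y b] assms by force
next
  case False
  then show ?thesis using IVT2'[of \<phi> b y a] assms by force
qed

lemma unimodal_image_subset:
  fixes f :: "real \<Rightarrow> real" and c :: real
  assumes mono: "\<And>x y. f (f c) \<le> x \<Longrightarrow> x \<le> y \<Longrightarrow> y \<le> c \<Longrightarrow> f x \<le> f y"
    and antimono: "\<And>x y. c \<le> x \<Longrightarrow> x \<le> y \<Longrightarrow> y \<le> f c \<Longrightarrow> f y \<le> f x"
    and "f (f c) \<le> f (f (f c))"
  shows "f ` {f (f c)..f c} \<subseteq> {f (f c)..f c}"
proof
  fix y assume "y \<in> f ` {f (f c)..f c}"
  then obtain x where x: "x \<in> {f (f c)..f c}" "y = f x" by blast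
  show "y \<in> {f (f c)..f c}"
  proof (cases "x \<le> c")
    case True
    then show ?thesis using mono[of "f (f c)" x] mono[of x c] x assms(3) by auto
  next
    case False
    then show ?thesis using antimono[of c x] antimono[of x "f c"] x by auto
  qed
qed

lemma unimodal_horseshoe_points:
  fixes f :: "real \<Rightarrow> real" and c :: real
  assumes cont: "\<And>x. isCont f x"
    and "f (f c) < f (f (f c))" "f (f (f c)) < c" "c < f c"
  obtains u p q v where "c \<le> u" "u < p" "p < v" "v < f c" "f (f c) < q" "q < c"
    "f u = p" "f p = c" "f q = c" "f v = q"
proof -
  have cont_on: "continuous_on {s..t} f" for s t
    by (intro continuous_at_imp_continuous_on ballI cont)
  obtain p where p: "c \<le> p" "p \<le> f c" "f p = c"
    using IVT2'[of f "f c" c c] cont_on assms(2-4) by force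
  have "c < p" "p < f c" using p assms(2-4) by (auto simp: order.order_iff_strict)
  obtain u where u: "c \<le> u" "u \<le> p" "f u = p"
    using IVT2'[of f p p c] cont_on p \<open>c < p\<close> by force
  obtain q where q: "f (f c) \<le> q" "q \<le> c" "f q = c"
    using IVT'[of f "f (f c)" c c] cont_on assms(2-4) by force
  obtain v where v: "p \<le> v" "v \<le> f c" "f v = q"
    using IVT2'[of f "f c" q p] cont_on p q \<open>p < f c\<close> by force
  have "u \<noteq> p" "q \<noteq> f (f c)" "q \<noteq> c" "v \<noteq> p" "v \<noteq> f c"
    using assms(2-4) p u q v \<open>c < p\<close> by auto
  then show ?thesis using that p u q v by (simp add: order.order_iff_strict)
qed

text \<open>\<open>f ^^ 2\<close> maps \<open>[u, p]\<close> increasingly onto \<open>[f (f u), f (f p)] = [c, f c]\<close> and \<open>[p, v]\<close>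
  decreasingly onto \<open>[f (f v), f (f p)] = [c, f c]\<close>, both containing \<open>[u, v]\<close>, while
  \<open>f (f p) = f c > v\<close>.\<close>
lemma unimodal_horseshoe:
  fixes f :: "real \<Rightarrow> real" and c :: real
  assumes cont: "\<And>x. isCont f x"
    and mono: "\<And>x y. f (f c) \<le> x \<Longrightarrow> x \<le> y \<Longrightarrow> y \<le> c \<Longrightarrow> f x \<le> f y"
    and antimono: "\<And>x y. c \<le> x \<Longrightarrow> x \<le> y \<Longrightarrow> y \<le> f c \<Longrightarrow> f y \<le> f x"
    and "f (f c) < f (f (f c))" "f (f (f c)) < c" "c < f c"
  obtains u p v where "horseshoe f u p v" "f (f c) \<le> u" "v \<le> f c"
proof -
  obtain u p q v where pts: "c \<le> u" "u < p" "p < v" "v < f c" "f (f c) < q" "q < c"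
    "f u = p" "f p = c" "f q = c" "f v = q"
    using unimodal_horseshoe_points[OF cont assms(4-6)] .
  have f2: "(f ^^ 2) x = f (f x)" for x by (simp add: numeral_2_eq_2)
  have cont2: "continuous_on {s..t} (\<lambda>x. f (f x))" for s t
    by (intro continuous_at_imp_continuous_on ballI isCont_o2[OF cont cont])
  have "horseshoe f u p v"
  proof
    show "{u..v} \<subseteq> (f ^^ 2) ` {u..p}" "{u..v} \<subseteq> (f ^^ 2) ` {p..v}"
      using pts cont2 by (auto intro!: continuous_image_between_endpoints simp: f2)
    show "(f ^^ 2) x \<le> (f ^^ 2) y" if "u \<le> x" "x \<le> y" "y \<le> p" for x y
    proof -
      have "f y \<le> f x" by (rule antimono) (use that pts in linarith)+
      moreover have "f x \<le> p" using antimono[of u x] that pts by linarith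
      moreover have "c \<le> f y" using antimono[of y p] that pts by linarith
      ultimately show ?thesis unfolding f2 using pts by (intro antimono[of "f y" "f x"]) linarith+
    qed
    show "(f ^^ 2) y \<le> (f ^^ 2) x" if "p \<le> x" "x \<le> y" "y \<le> v" for x y
    proof -
      have "f y \<le> f x" by (rule antimono) (use that pts in linarith)+
      moreover have "f x \<le> c" using antimono[of p x] that pts by linarith
      moreover have "q \<le> f y" using antimono[of y v] that pts by linarith
      ultimately show ?thesis unfolding f2 using pts by (intro mono[of "f y" "f x"]) linarith+
    qed
    show "(f ^^ 2) p \<notin> {u..v}" unfolding f2 using pts by simp
  qed (use cont pts in simp_all)
  then show ?thesis using that pts by auto
qed

lemma sq_mult_exp_deriv:
  "((\<lambda>x. x\<^sup>2 * exp (r - x)) has_real_derivative x * (2 - x) * exp (r - x)) (at x)"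
  by (auto intro!: derivative_eq_intros simp: power2_eq_square algebra_simps)

lemma sq_mult_exp_mono:
  fixes x y r :: real
  assumes "0 \<le> x" "x \<le> y" "y \<le> 2"
  shows "x\<^sup>2 * exp (r - x) \<le> y\<^sup>2 * exp (r - y)"
proof (rule DERIV_nonneg_imp_increasing_open[OF assms(2)])
  fix z :: real assume "x < z" "z < y"
  then have "0 \<le> z * (2 - z) * exp (r - z)" using assms by simp
  then show "\<exists>d. ((\<lambda>x. x\<^sup>2 * exp (r - x)) has_real_derivative d) (at z) \<and> 0 \<le> d"
    using sq_mult_exp_deriv by blast
qed (intro continuous_intros)

lemma sq_mult_exp_antimono:
  fixes x y r :: real
  assumes "2 \<le> x" "x \<le> y"
  shows "y\<^sup>2 * exp (r - y) \<le> x\<^sup>2 * exp (r - x)"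
proof (rule DERIV_nonpos_imp_decreasing_open[OF assms(2)])
  fix z :: real assume "x < z" "z < y"
  then have "z * (2 - z) * exp (r - z) \<le> 0"
    using assms by (intro mult_nonpos_nonneg mult_nonneg_nonpos) auto
  then show "\<exists>d. ((\<lambda>x. x\<^sup>2 * exp (r - x)) has_real_derivative d) (at z) \<and> d \<le> 0"
    using sq_mult_exp_deriv by blast
qed (intro continuous_intros)

theorem theorem4p14:
  fixes r k c :: real and f :: "real \<Rightarrow> real"
  assumes "k \<ge> 0"
    and "f = (\<lambda>x. x\<^sup>2 * exp (r - x) + k)"
    and "c = 2"
    and "f (f c) < f (f (f c))" and "f (f (f c)) < c" and "c < f c"
  shows "f ` {f (f c) .. f c} \<subseteq> {f (f c) .. f c}
     \<and> LY_chaotic {f (f c) .. f c} f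
     \<and> BC_chaotic {f (f c) .. f c} f
     \<and> D_chaotic {f (f c) .. f c} f"
proof -
  have cont: "isCont f x" for x unfolding assms(2) by (intro continuous_intros)
  have "0 \<le> f (f c)" unfolding assms(2) using assms(1) by simp
  then have mono: "f x \<le> f y" if "f (f c) \<le> x" "x \<le> y" "y \<le> c" for x y
    using sq_mult_exp_mono[of x y r] that unfolding assms(2,3) by simp
  have antimono: "f y \<le> f x" if "c \<le> x" "x \<le> y" for x y
    using sq_mult_exp_antimono[of x y r] that unfolding assms(2,3) by simp
  obtain u p v where hs: "horseshoe f u p v" "f (f c) \<le> u" "v \<le> f c"
    using unimodal_horseshoe[OF cont mono antimono assms(4-6)] by blast
  have inv: "f ` {f (f c) .. f c} \<subseteq> {f (f c) .. f c}"
    using unimodal_image_subset[of f c, OF mono antimono] assms(4) by simp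
  have "{u..v} \<subseteq> {f (f c) .. f c}" using hs(2,3) by auto
  then show ?thesis
    using inv horseshoe.LY_chaotic[OF hs(1)] horseshoe.BC_chaotic[OF hs(1)]
      horseshoe.D_chaotic[OF hs(1)] by blast
qed

end
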